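(* Consider the distributed quantized weight-balancing algorithm described in the context on a strongly connected digraph with $N$ nodes, with step-size $\gamma(k)=2^{-n}$ for $2^n-1\le k\le 2^{n+1}-2$. Let $\tilde T=3N(N-1)N^{2N}$ and let $k_0\in\mathbb{Z}_{++}$ be such that $\gamma(k)=\gamma(k_0)$ for all $k\in[k_0,k_0+\tilde T]$. Let $\tau\ge k_0$ be an integer such that $\Vert\boldsymbol{\epsilon}(\tau-1)\Vert_1<2N(N-1)\gamma(\tau-1)$ and $\Vert\boldsymbol{\epsilon}(\tau)\Vert_1\ge 2N(N-1)\gamma(\tau)$. Then there exists an integer $t\in[1,\tilde T]$ such that $\Vert\boldsymbol{\epsilon}(\tau+t)\Vert_1<2N(N-1)\gamma(\tau+t)$.
   Context: $\mathcal{G}=(\mathcal{V},\mathcal{E})$, $\mathcal{V}=\{1,\dots,N\}$, no self-loops; $\mathcal{N}_i^-=\{j:(j,i)\in\mathcal{E}\}$, $\mathcal{N}_i^+=\{j:(i,j)\in\mathcal{E}\}$, $d_i^+=|\mathcal{N}_i^+|$. Algorithm: $a_{ij}(0)=1$ if $j\in\mathcal{N}_i^-$ and $0$ otherwise; $b_i(k)=\sum_{j\in\mathcal{N}_i^-}a_{ij}(k)-\sum_{j\in\mathcal{N}_i^+}a_{ji}(k)$; $n_i(k)=1$ if $b_i(k)\ge d_i^+\gamma(k)$, else $0$; $a_{ij}(k+1)=a_{ij}(k)+n_j(k)\gamma(k)$ for $j\in\mathcal{N}_i^-$. $\boldsymbol{\epsilon}(k)=(|b_i(k)|)_{i=1}^N$.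 *)

theory Defs
  imports Complex_Main
begin

definition wb_gamma :: "nat \<Rightarrow> real" where
  "wb_gamma k = (1/2) ^ (THE n::nat. 2^n \<le> k + 1 \<and> k + 1 < 2^(Suc n))"

definition in_nbrs :: "nat \<Rightarrow> (nat \<times> nat) set \<Rightarrow> nat \<Rightarrow> nat set" where
  "in_nbrs N E i = {j \<in> {1..N}. (j, i) \<in> E}"

definition out_nbrs :: "nat \<Rightarrow> (nat \<times> nat) set \<Rightarrow> nat \<Rightarrow> nat set" where
  "out_nbrs N E i = {j \<in> {1..N}. (i, j) \<in> E}"

definition out_deg :: "nat \<Rightarrow> (nat \<times> nat) set \<Rightarrow> nat \<Rightarrow> nat" where
  "out_deg N E i = card (out_nbrs N E i)"

text \<open>Weight imbalance b_i for a weight assignment a (a i j = weight of edge (j,i)).\<close>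
definition imbal :: "nat \<Rightarrow> (nat \<times> nat) set \<Rightarrow> (nat \<Rightarrow> nat \<Rightarrow> real) \<Rightarrow> nat \<Rightarrow> real" where
  "imbal N E a i = (\<Sum>j\<in>in_nbrs N E i. a i j) - (\<Sum>j\<in>out_nbrs N E i. a j i)"

fun wb_a :: "nat \<Rightarrow> (nat \<times> nat) set \<Rightarrow> nat \<Rightarrow> nat \<Rightarrow> nat \<Rightarrow> real" where
  "wb_a N E 0 = (\<lambda>i j. if j \<in> in_nbrs N E i then 1 else 0)"
| "wb_a N E (Suc k) = (\<lambda>i j.
     if j \<in> in_nbrs N E i
     then wb_a N E k i j +
          (if imbal N E (wb_a N E k) j \<ge> real (out_deg N E j) * wb_gamma k then wb_gamma k else 0)
     else wb_a N E k i j)"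

definition wb_b :: "nat \<Rightarrow> (nat \<times> nat) set \<Rightarrow> nat \<Rightarrow> nat \<Rightarrow> real" where
  "wb_b N E k i = imbal N E (wb_a N E k) i"

definition eps_norm1 :: "nat \<Rightarrow> (nat \<times> nat) set \<Rightarrow> nat \<Rightarrow> real" where
  "eps_norm1 N E k = (\<Sum>i\<in>{1..N}. \<bar>wb_b N E k i\<bar>)"

definition strongly_connected :: "nat \<Rightarrow> (nat \<times> nat) set \<Rightarrow> bool" where
  "strongly_connected N E \<longleftrightarrow> (\<forall>i\<in>{1..N}. \<forall>j\<in>{1..N}. (i, j) \<in> E\<^sup>*)"

end

theory Submission
  imports Defs "HOL-Library.Discrete_Functions"
begin

text \<open>
  Since \<open>\<parallel>\<epsilon>\<parallel>\<^sub>1\<close> never increases, it can only climb above the threshold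
  \<open>2N(N-1)\<gamma>\<close> at a step \<open>\<tau>\<close> where \<open>\<gamma>\<close> halves, and then \<open>\<gamma>\<close> stays constant on
  \<open>[\<tau>, \<tau> + T]\<close>.  If \<open>\<parallel>\<epsilon>\<parallel>\<^sub>1\<close> stayed above the threshold on this window, some node
  would fire at every step (a step without firings forces every \<open>b\<^sub>i < (N-1)\<gamma>\<close>, hence
  \<open>\<parallel>\<epsilon>\<parallel>\<^sub>1 = 2 \<Sum> max b\<^sub>i 0\<close> below the threshold), i.e. there would be at least \<open>T + 1\<close>
  firings.  On the other hand some node \<open>v\<close> never fires in the window: otherwise the node
  whose last firing is earliest ends with positive imbalance while all others end nonnegative,
  contradicting \<open>\<Sum> b\<^sub>i = 0\<close>.  Along an edge \<open>(x, y)\<close> every firing of \<open>x\<close> raises \<open>b\<^sub>y\<close> by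
  \<open>\<gamma>\<close>, every firing of \<open>y\<close> lowers it by at most \<open>(N-1)\<gamma>\<close>, and \<open>b\<^sub>y\<close> stays within
  \<open>\<plusminus>\<parallel>\<epsilon>(\<tau>)\<parallel>\<^sub>1\<close>; so the firing counts satisfy
  \<open>c\<^sub>x \<le> 2\<parallel>\<epsilon>(\<tau>)\<parallel>\<^sub>1/\<gamma> + (N-1) c\<^sub>y\<close>.  Propagating this back from \<open>c\<^sub>v = 0\<close> along the
  strongly connected graph bounds the total number of firings by \<open>8N(N-1)N\<^sup>N \<le> T\<close>.
\<close>

section \<open>Bounds propagating along a strongly connected relation\<close>

lemma rtrancl_enters_set:
  assumes "(x, y) \<in> r\<^sup>*" "x \<notin> R" "y \<in> R"
  shows "\<exists>a b. (a, b) \<in> r \<and> a \<notin> R \<and> b \<in> R"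
  using assms by (induction rule: rtrancl_induct) blast+

lemma card_bounded_layer_ge:
  fixes c :: "'a \<Rightarrow> real"
  assumes fin: "finite V" and r: "r \<subseteq> V \<times> V" and v: "v \<in> V" and reach: "\<forall>x\<in>V. (x, v) \<in> r\<^sup>*"
    and root: "c v \<le> D" and D: "0 \<le> D" and M: "0 \<le> M"
    and edge: "\<forall>(x, y)\<in>r. c x \<le> D + M * c y"
  shows "min (Suc k) (card V) \<le> card {w \<in> V. c w \<le> D * (M + 1) ^ k}"
proof -
  define R where "R k = {w \<in> V. c w \<le> D * (M + 1) ^ k}" for k
  have D_le: "D \<le> D * (M + 1) ^ k" for k
    using D M by (simp add: mult_le_cancel_left1 one_le_power)
  have fin_R: "finite (R k)" for k
    unfolding R_def using fin by simp
  have R_mono: "R k \<subseteq> R (Suc k)" for k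
  proof -
    have "D * (M + 1) ^ k \<le> D * (M + 1) ^ Suc k"
      using D M by (intro mult_left_mono power_increasing) auto
    then show ?thesis unfolding R_def by auto
  qed
  have v_R: "v \<in> R k" for k
    unfolding R_def using v root D_le[of k] by simp
  have "min (Suc k) (card V) \<le> card (R k)"
  proof (induction k)
    case 0
    from fin_R v_R have "0 < card (R 0)" unfolding card_gt_0_iff by blast
    then show ?case by simp
  next
    case (Suc k)
    show ?case
    proof (cases "R k = V")
      case True
      with R_mono[of k] have "R (Suc k) = V" unfolding R_def by blast
      then show ?thesis by simp
    next
      case False
      then obtain x0 where "x0 \<in> V" "x0 \<notin> R k" unfolding R_def by blast
      with reach v_R obtain x y where xy: "(x, y) \<in> r" "x \<notin> R k" "y \<in> R k"
        using rtrancl_enters_set[of x0 v r "R k"] by blast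
      have "c x \<le> D + M * c y" using edge xy(1) by blast
      also have "\<dots> \<le> D * (M + 1) ^ k + M * (D * (M + 1) ^ k)"
        using xy(3) D_le[of k] M unfolding R_def by (intro add_mono mult_left_mono) auto
      also have "\<dots> = D * (M + 1) ^ Suc k" by (simp add: algebra_simps)
      finally have "insert x (R k) \<subseteq> R (Suc k)"
        using xy(1) r R_mono[of k] unfolding R_def by auto
      with xy(2) fin_R Suc.IH card_mono[OF fin_R this] show ?thesis by simp
    qed
  qed
  then show ?thesis unfolding R_def .
qed

lemma bound_propagates_backward:
  fixes c :: "'a \<Rightarrow> real"
  assumes "finite V" "r \<subseteq> V \<times> V" "v \<in> V" "\<forall>x\<in>V. (x, v) \<in> r\<^sup>*"
    and "c v \<le> D" "0 \<le> D" "0 \<le> M" "\<forall>(x, y)\<in>r. c x \<le> D + M * c y"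
  shows "\<forall>x\<in>V. c x \<le> D * (M + 1) ^ (card V - 1)"
proof -
  let ?R = "{w \<in> V. c w \<le> D * (M + 1) ^ (card V - 1)}"
  have "card V \<le> card ?R"
    using card_bounded_layer_ge[OF assms, of "card V - 1"] by simp
  then have "?R = V" using \<open>finite V\<close> by (intro card_seteq) auto
  then show ?thesis by blast
qed

lemma wb_gamma_eq_floor_log: "wb_gamma k = (1/2) ^ floor_log (Suc k)"
proof -
  have "(THE n::nat. 2^n \<le> k + 1 \<and> k + 1 < 2^(Suc n)) = floor_log (Suc k)"
  proof (rule the_equality)
    show "2 ^ floor_log (Suc k) \<le> k + 1 \<and> k + 1 < 2 ^ Suc (floor_log (Suc k))"
      using floor_log_exp2_le[of "Suc k"] floor_log_exp2_gt[of "Suc k"] by simp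
  next
    fix n assume "2^n \<le> k + 1 \<and> k + 1 < (2::nat) ^ Suc n"
    then show "n = floor_log (Suc k)" by (intro floor_log_eqI[symmetric]) auto
  qed
  then show ?thesis unfolding wb_gamma_def by simp
qed

lemma wb_gamma_pos: "0 < wb_gamma k"
  by (simp add: wb_gamma_eq_floor_log)

lemma wb_gamma_le_double_Suc: "wb_gamma k \<le> 2 * wb_gamma (Suc k)"
proof -
  have "floor_log (Suc (Suc k)) \<le> floor_log (2 * Suc k)" by (rule floor_log_le_iff) simp
  also have "\<dots> = Suc (floor_log (Suc k))" by (rule floor_log_twice) simp
  finally have "floor_log (Suc (Suc k)) \<le> Suc (floor_log (Suc k))" .
  then have "(1/2::real) ^ Suc (floor_log (Suc k)) \<le> (1/2) ^ floor_log (Suc (Suc k))"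
    by (rule power_decreasing) simp_all
  then show ?thesis by (simp add: wb_gamma_eq_floor_log)
qed

lemma wb_gamma_change_imp_power2:
  assumes "wb_gamma (Suc k) \<noteq> wb_gamma k"
  shows "2 ^ floor_log (Suc (Suc k)) = Suc (Suc k)"
proof -
  let ?n = "floor_log (Suc (Suc k))"
  have le: "2 ^ ?n \<le> Suc (Suc k)" by (rule floor_log_exp2_le) simp
  have "\<not> 2 ^ ?n \<le> Suc k"
  proof
    assume "2 ^ ?n \<le> Suc k"
    moreover have "Suc k < 2 * 2 ^ ?n" using floor_log_exp2_gt[of "Suc (Suc k)"] by simp
    ultimately have "floor_log (Suc k) = ?n" by (intro floor_log_eqI) simp_all
    with assms show False by (simp add: wb_gamma_eq_floor_log)
  qed
  with le show ?thesis by linarith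
qed

lemma wb_gamma_const_after_change:
  assumes "wb_gamma (Suc k) \<noteq> wb_gamma k" "Suc k \<le> m" "m \<le> 2 * Suc k"
  shows "wb_gamma m = wb_gamma (Suc k)"
proof -
  define n where "n = floor_log (Suc (Suc k))"
  have pow: "2 ^ n = Suc (Suc k)" unfolding n_def by (rule wb_gamma_change_imp_power2[OF assms(1)])
  have "floor_log (Suc m) = n"
    using assms(2,3) by (intro floor_log_eqI) (simp_all add: pow)
  then show ?thesis unfolding n_def by (simp add: wb_gamma_eq_floor_log)
qed

lemma wb_gamma_const_on_window:
  assumes change: "wb_gamma (Suc p) \<noteq> wb_gamma p"
    and start: "k0 \<le> Suc p"
    and const: "\<forall>k. k0 \<le> k \<and> k \<le> k0 + T \<longrightarrow> wb_gamma k = wb_gamma k0"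
    and k: "Suc p \<le> k" "k \<le> Suc p + T"
  shows "wb_gamma k = wb_gamma (Suc p)"
proof (cases "Suc p = k0")
  case True
  with k const[rule_format, of k] show ?thesis by simp
next
  case False
  with start have "k0 \<le> p" by simp
  have "k0 + T < Suc p"
  proof (rule ccontr)
    assume "\<not> k0 + T < Suc p"
    with \<open>k0 \<le> p\<close> have "wb_gamma p = wb_gamma k0" "wb_gamma (Suc p) = wb_gamma k0"
      using const[rule_format, of p] const[rule_format, of "Suc p"] by simp_all
    with change show False by simp
  qed
  with k have "k \<le> 2 * Suc p" by simp
  with wb_gamma_const_after_change[OF change] k show ?thesis by blast
qed

section \<open>Imbalance dynamics\<close>

lemma finite_in_nbrs [simp]: "finite (in_nbrs N E i)"
  unfolding in_nbrs_def by simp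

lemma in_nbrs_if_out_nbrs: "i \<in> {1..N} \<Longrightarrow> j \<in> out_nbrs N E i \<Longrightarrow> i \<in> in_nbrs N E j"
  unfolding in_nbrs_def out_nbrs_def by auto

lemma out_deg_le:
  assumes "\<forall>i. (i, i) \<notin> E" "i \<in> {1..N}"
  shows "out_deg N E i \<le> N - 1"
proof -
  have "out_nbrs N E i \<subseteq> {1..N} - {i}" unfolding out_nbrs_def using assms(1) by auto
  then have "card (out_nbrs N E i) \<le> card ({1..N} - {i})" by (rule card_mono[rotated]) simp
  with assms(2) show ?thesis unfolding out_deg_def by simp
qed

lemma sum_in_nbrs_swap:
  "(\<Sum>i\<in>{1..N}. \<Sum>j\<in>in_nbrs N E i. f i j) = (\<Sum>j\<in>{1..N}. \<Sum>i\<in>out_nbrs N E j. f i j)"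
proof -
  have "(\<Sum>i\<in>{1..N}. \<Sum>j\<in>in_nbrs N E i. f i j)
      = (\<Sum>i\<in>{1..N}. \<Sum>j\<in>{1..N}. if (j, i) \<in> E then f i j else 0)"
    unfolding in_nbrs_def by (intro sum.cong refl sum.inter_filter) simp
  also have "\<dots> = (\<Sum>j\<in>{1..N}. \<Sum>i\<in>{1..N}. if (j, i) \<in> E then f i j else 0)"
    by (rule sum.swap)
  also have "\<dots> = (\<Sum>j\<in>{1..N}. \<Sum>i\<in>out_nbrs N E j. f i j)"
    unfolding out_nbrs_def by (intro sum.cong refl sum.inter_filter[symmetric]) simp
  finally show ?thesis .
qed

lemma sum_imbal_eq_0: "(\<Sum>i\<in>{1..N}. imbal N E a i) = 0"
  unfolding imbal_def sum_subtractf sum_in_nbrs_swap[where f = a] by simp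

lemma sum_wb_b_eq_0: "(\<Sum>i\<in>{1..N}. wb_b N E k i) = 0"
  unfolding wb_b_def by (rule sum_imbal_eq_0)

definition fire :: "nat \<Rightarrow> (nat \<times> nat) set \<Rightarrow> nat \<Rightarrow> nat \<Rightarrow> bool" where
  "fire N E k j \<longleftrightarrow> real (out_deg N E j) * wb_gamma k \<le> wb_b N E k j"

definition received :: "nat \<Rightarrow> (nat \<times> nat) set \<Rightarrow> nat \<Rightarrow> nat \<Rightarrow> nat" where
  "received N E k i = card {j \<in> in_nbrs N E i. fire N E k j}"

lemma wb_a_Suc_in_nbrs:
  "j \<in> in_nbrs N E i \<Longrightarrow>
    wb_a N E (Suc k) i j = wb_a N E k i j + (if fire N E k j then wb_gamma k else 0)"
  unfolding fire_def wb_b_def by simp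

lemma wb_b_Suc:
  assumes i: "i \<in> {1..N}"
  shows "wb_b N E (Suc k) i = wb_b N E k i
    - (if fire N E k i then real (out_deg N E i) * wb_gamma k else 0)
    + wb_gamma k * real (received N E k i)"
proof -
  have "(\<Sum>j\<in>in_nbrs N E i. wb_a N E (Suc k) i j)
      = (\<Sum>j\<in>in_nbrs N E i. wb_a N E k i j) + wb_gamma k * real (received N E k i)"
    by (simp only: wb_a_Suc_in_nbrs sum.distrib cong: sum.cong)
      (simp add: sum.inter_filter[symmetric] received_def)
  moreover have "(\<Sum>j\<in>out_nbrs N E i. wb_a N E (Suc k) j i)
      = (\<Sum>j\<in>out_nbrs N E i. wb_a N E k j i)
        + (if fire N E k i then real (out_deg N E i) * wb_gamma k else 0)"
    using in_nbrs_if_out_nbrs[OF i]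
    by (simp only: wb_a_Suc_in_nbrs sum.distrib cong: sum.cong) (simp add: out_deg_def)
  ultimately show ?thesis
    unfolding wb_b_def imbal_def by simp
qed

lemma sum_received:
  "(\<Sum>i\<in>{1..N}. received N E k i) = (\<Sum>j\<in>{1..N}. if fire N E k j then out_deg N E j else 0)"
proof -
  have "(\<Sum>i\<in>{1..N}. received N E k i)
      = (\<Sum>i\<in>{1..N}. \<Sum>j\<in>in_nbrs N E i. if fire N E k j then 1 else 0)"
    unfolding received_def by (simp add: sum.inter_filter[symmetric])
  also have "\<dots> = (\<Sum>j\<in>{1..N}. \<Sum>i\<in>out_nbrs N E j. if fire N E k j then 1 else 0)"
    by (rule sum_in_nbrs_swap)
  also have "\<dots> = (\<Sum>j\<in>{1..N}. if fire N E k j then out_deg N E j else 0)"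
    by (intro sum.cong refl) (simp add: out_deg_def)
  finally show ?thesis .
qed

lemma wb_b_Suc_silent:
  "i \<in> {1..N} \<Longrightarrow> \<not> fire N E k i \<Longrightarrow>
    wb_b N E (Suc k) i = wb_b N E k i + wb_gamma k * real (received N E k i)"
  by (simp add: wb_b_Suc)

lemma wb_b_Suc_fire_ge:
  assumes "i \<in> {1..N}" "fire N E k i"
  shows "wb_gamma k * real (received N E k i) \<le> wb_b N E (Suc k) i"
  using assms by (simp add: wb_b_Suc fire_def)

lemma eps_norm1_nonneg: "0 \<le> eps_norm1 N E k"
  unfolding eps_norm1_def by (rule sum_nonneg) simp

lemma abs_wb_b_le_eps_norm1: "i \<in> {1..N} \<Longrightarrow> \<bar>wb_b N E k i\<bar> \<le> eps_norm1 N E k"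
  unfolding eps_norm1_def by (rule member_le_sum) auto

lemma eps_norm1_Suc_le: "eps_norm1 N E (Suc k) \<le> eps_norm1 N E k"
proof -
  let ?g = "wb_gamma k"
  let ?sent = "\<lambda>i. if fire N E k i then real (out_deg N E i) * ?g else 0"
  have step: "\<bar>wb_b N E (Suc k) i\<bar> \<le> \<bar>wb_b N E k i\<bar> - ?sent i + ?g * real (received N E k i)"
    if i: "i \<in> {1..N}" for i
  proof -
    have "0 \<le> real (out_deg N E i) * ?g" using wb_gamma_pos[of k] by simp
    \<comment> \<open>a firing node only gives away weight it has in excess, so its sign cannot flip\<close>
    then have "\<bar>wb_b N E k i - ?sent i\<bar> = \<bar>wb_b N E k i\<bar> - ?sent i"
      by (auto simp: fire_def)
    moreover have "0 \<le> ?g * real (received N E k i)" using wb_gamma_pos[of k] by simp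
    ultimately show ?thesis unfolding wb_b_Suc[OF i] by linarith
  qed
  have "eps_norm1 N E (Suc k)
      \<le> (\<Sum>i\<in>{1..N}. \<bar>wb_b N E k i\<bar> - ?sent i + ?g * real (received N E k i))"
    unfolding eps_norm1_def by (rule sum_mono) (rule step)
  also have "\<dots> = eps_norm1 N E k - (\<Sum>i\<in>{1..N}. ?sent i)
      + ?g * (\<Sum>i\<in>{1..N}. real (received N E k i))"
    unfolding eps_norm1_def by (simp add: sum.distrib sum_subtractf sum_distrib_left)
  also have "?g * (\<Sum>i\<in>{1..N}. real (received N E k i)) = (\<Sum>i\<in>{1..N}. ?sent i)"
    unfolding of_nat_sum[symmetric] sum_received by (auto simp: sum_distrib_left intro!: sum.cong)
  finally show ?thesis by simp
qed

lemma eps_norm1_antimono: "s \<le> e \<Longrightarrow> eps_norm1 N E e \<le> eps_norm1 N E s"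
  by (induction e rule: dec_induct) (use eps_norm1_Suc_le order_trans in blast)+

lemma eps_norm1_eq_pos_part: "eps_norm1 N E k = 2 * (\<Sum>i\<in>{1..N}. max (wb_b N E k i) 0)"
proof -
  have "eps_norm1 N E k = (\<Sum>i\<in>{1..N}. 2 * max (wb_b N E k i) 0 - wb_b N E k i)"
    unfolding eps_norm1_def by (intro sum.cong refl) auto
  also have "\<dots> = 2 * (\<Sum>i\<in>{1..N}. max (wb_b N E k i) 0)"
    using sum_wb_b_eq_0[of N E k] by (simp add: sum_subtractf sum_distrib_left)
  finally show ?thesis .
qed

lemma eps_norm1_less_if_none_fires:
  assumes no_loops: "\<forall>i. (i, i) \<notin> E" and N: "2 \<le> N"
    and silent: "\<forall>j\<in>{1..N}. \<not> fire N E k j"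
  shows "eps_norm1 N E k < 2 * real N * (real N - 1) * wb_gamma k"
proof -
  have "max (wb_b N E k i) 0 < (real N - 1) * wb_gamma k" if i: "i \<in> {1..N}" for i
  proof -
    have "\<not> fire N E k i" using silent i by blast
    then have "wb_b N E k i < real (out_deg N E i) * wb_gamma k" by (simp add: fire_def)
    also have "\<dots> \<le> (real N - 1) * wb_gamma k"
      using out_deg_le[OF no_loops i] N wb_gamma_pos[of k] by (intro mult_right_mono) auto
    finally show ?thesis using N wb_gamma_pos[of k] by simp
  qed
  then have "(\<Sum>i\<in>{1..N}. max (wb_b N E k i) 0) < (\<Sum>i\<in>{1..N}. (real N - 1) * wb_gamma k)"
    using N by (intro sum_strict_mono) auto
  then show ?thesis unfolding eps_norm1_eq_pos_part by simp
qed

section \<open>A node that never fires\<close>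

lemma in_nbrs_nonempty:
  assumes edges: "E \<subseteq> {1..N} \<times> {1..N}" and sc: "strongly_connected N E" and N: "2 \<le> N"
    and y: "y \<in> {1..N}"
  shows "in_nbrs N E y \<noteq> {}"
proof -
  have "\<exists>z\<in>{1..N}. z \<noteq> y"
    using N y by (intro bexI[of _ "if y = 1 then 2 else 1"]) auto
  then obtain z where z: "z \<in> {1..N}" "z \<noteq> y" by blast
  then have "(z, y) \<in> E\<^sup>*" using sc y unfolding strongly_connected_def by blast
  with z(2) obtain w where "(w, y) \<in> E" by (auto elim: rtranclE)
  with edges have "w \<in> in_nbrs N E y" unfolding in_nbrs_def by auto
  then show ?thesis by blast
qed

lemma wb_b_mono_while_silent:
  assumes "i \<in> {1..N}" "j \<le> e" "\<forall>k. j \<le> k \<and> k < e \<longrightarrow> \<not> fire N E k i"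
  shows "wb_b N E j i \<le> wb_b N E e i"
  using assms(2,3)
proof (induction e rule: dec_induct)
  case (step k)
  have "wb_b N E k i \<le> wb_b N E (Suc k) i"
    using step.prems step.hyps wb_gamma_pos[of k] by (simp add: wb_b_Suc_silent[OF assms(1)])
  with step show ?case by simp
qed simp

lemma wb_b_nonneg_after_fire:
  assumes i: "i \<in> {1..N}" and "fire N E t i" "t < e"
    and silent: "\<forall>k. t < k \<and> k < e \<longrightarrow> \<not> fire N E k i"
  shows "0 \<le> wb_b N E e i"
proof -
  have "0 \<le> wb_b N E (Suc t) i"
    using wb_b_Suc_fire_ge[OF i \<open>fire N E t i\<close>] wb_gamma_pos[of t]
    by (meson less_imp_le mult_nonneg_nonneg of_nat_0_le_iff order_trans)
  also have "\<dots> \<le> wb_b N E e i"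
    using silent \<open>t < e\<close> by (intro wb_b_mono_while_silent[OF i]) auto
  finally show ?thesis .
qed

lemma wb_b_pos_after_last_fire:
  assumes i: "i \<in> {1..N}" and fire_t: "fire N E t i"
    and silent: "\<forall>k. t < k \<and> k < e \<longrightarrow> \<not> fire N E k i"
    and u: "u \<in> in_nbrs N E i" "fire N E m u" and m: "t \<le> m" "m < e"
  shows "0 < wb_b N E e i"
proof -
  have "0 < received N E m i"
    unfolding received_def card_gt_0_iff using u by auto
  then have recv: "0 < wb_gamma m * real (received N E m i)"
    using wb_gamma_pos[of m] by simp
  have "0 < wb_b N E (Suc m) i"
  proof (cases "fire N E m i")
    case True
    with recv show ?thesis using wb_b_Suc_fire_ge[OF i] by (meson less_le_trans)
  next
    case False
    with fire_t have "t < m" using m by (cases "t = m") auto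
    with silent m have "0 \<le> wb_b N E m i"
      by (intro wb_b_nonneg_after_fire[OF i fire_t]) auto
    with recv False show ?thesis by (simp add: wb_b_Suc_silent[OF i])
  qed
  also have "\<dots> \<le> wb_b N E e i"
    using silent m by (intro wb_b_mono_while_silent[OF i]) auto
  finally show ?thesis .
qed

lemma exists_silent_node:
  assumes edges: "E \<subseteq> {1..N} \<times> {1..N}" and sc: "strongly_connected N E" and N: "2 \<le> N"
  shows "\<exists>v\<in>{1..N}. \<forall>k. s \<le> k \<and> k < e \<longrightarrow> \<not> fire N E k v"
proof (rule ccontr)
  assume "\<not> ?thesis"
  then have fires: "{k \<in> {s..<e}. fire N E k v} \<noteq> {}" if "v \<in> {1..N}" for v
    using that by auto
  define last where "last v = Max {k \<in> {s..<e}. fire N E k v}" for v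
  have last: "s \<le> last v" "last v < e" "fire N E (last v) v" if "v \<in> {1..N}" for v
    using Max_in[OF _ fires[OF that]] unfolding last_def by auto
  have silent: "\<forall>k. last v < k \<and> k < e \<longrightarrow> \<not> fire N E k v" if v: "v \<in> {1..N}" for v
  proof (intro allI impI notI)
    fix k assume k: "last v < k \<and> k < e" and "fire N E k v"
    with last(1)[OF v] have "k \<in> {k \<in> {s..<e}. fire N E k v}" by simp
    then have "k \<le> last v" unfolding last_def by (intro Max_ge) simp_all
    with k show False by simp
  qed
  \<comment> \<open>the node whose last firing is earliest still receives weight afterwards\<close>
  obtain y where y: "y \<in> {1..N}" and y_min: "\<forall>v\<in>{1..N}. last y \<le> last v"
    using ex_has_least_nat[of "\<lambda>v. v \<in> {1..N}" 1 last] N by auto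
  obtain x where x: "x \<in> in_nbrs N E y"
    using in_nbrs_nonempty[OF edges sc N y] by blast
  then have x_node: "x \<in> {1..N}" unfolding in_nbrs_def by simp
  then have "last y \<le> last x" "last x < e" using y_min last(2) by auto
  then have "0 < wb_b N E e y"
    by (rule wb_b_pos_after_last_fire[OF y last(3)[OF y] silent[OF y] x last(3)[OF x_node]])
  moreover have "0 \<le> wb_b N E e v" if "v \<in> {1..N}" for v
    using wb_b_nonneg_after_fire[OF that last(3)[OF that] last(2)[OF that] silent[OF that]] .
  ultimately have "0 < (\<Sum>v\<in>{1..N}. wb_b N E e v)"
    using y by (intro sum_pos2) auto
  with sum_wb_b_eq_0[of N E e] show False by simp
qed

section \<open>Counting firings\<close>

definition fire_count :: "nat \<Rightarrow> (nat \<times> nat) set \<Rightarrow> nat \<Rightarrow> nat \<Rightarrow> nat \<Rightarrow> real" where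
  "fire_count N E s n i = (\<Sum>k\<in>{s..<s + n}. of_bool (fire N E k i))"

lemma fire_count_0 [simp]: "fire_count N E s 0 i = 0"
  unfolding fire_count_def by simp

lemma fire_count_Suc:
  "fire_count N E s (Suc n) i = fire_count N E s n i + of_bool (fire N E (s + n) i)"
  unfolding fire_count_def by simp

lemma fire_count_nonneg: "0 \<le> fire_count N E s n i"
  unfolding fire_count_def by (rule sum_nonneg) simp

lemma fire_count_edge:
  assumes y: "y \<in> {1..N}" and x: "x \<in> in_nbrs N E y"
    and const: "\<forall>k. s \<le> k \<and> k < s + n \<longrightarrow> wb_gamma k = g"
  shows "g * fire_count N E s n x
    \<le> wb_b N E (s + n) y - wb_b N E s y + real (out_deg N E y) * g * fire_count N E s n y"
  using const
proof (induction n)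
  case (Suc n)
  have g: "wb_gamma (s + n) = g" using Suc.prems by simp
  have "of_bool (fire N E (s + n) x) \<le> real (received N E (s + n) y)"
  proof (cases "fire N E (s + n) x")
    case True
    then have "0 < received N E (s + n) y"
      unfolding received_def card_gt_0_iff using x by auto
    with True show ?thesis by simp
  qed simp
  then have "g * of_bool (fire N E (s + n) x) \<le> g * real (received N E (s + n) y)"
    using g wb_gamma_pos[of "s + n"] by (intro mult_left_mono) auto
  with Suc g show ?case
    by (simp add: fire_count_Suc wb_b_Suc[OF y] algebra_simps)
qed simp

lemma fire_count_edge_bound:
  assumes edges: "E \<subseteq> {1..N} \<times> {1..N}" and no_loops: "\<forall>i. (i, i) \<notin> E"
    and const: "\<forall>k. s \<le> k \<and> k < s + n \<longrightarrow> wb_gamma k = wb_gamma s"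
    and xy: "(x, y) \<in> E"
  shows "fire_count N E s n x
    \<le> 2 * eps_norm1 N E s / wb_gamma s + (real N - 1) * fire_count N E s n y"
proof -
  let ?g = "wb_gamma s"
  have y: "y \<in> {1..N}" and x: "x \<in> in_nbrs N E y"
    using xy edges unfolding in_nbrs_def by auto
  have "wb_b N E (s + n) y - wb_b N E s y \<le> eps_norm1 N E (s + n) + eps_norm1 N E s"
    using abs_wb_b_le_eps_norm1[OF y, of E "s + n"] abs_wb_b_le_eps_norm1[OF y, of E s] by linarith
  also have "\<dots> \<le> 2 * eps_norm1 N E s"
    using eps_norm1_antimono[of s "s + n" N E] by simp
  finally have drift: "wb_b N E (s + n) y - wb_b N E s y \<le> 2 * eps_norm1 N E s" .
  have "real (out_deg N E y) * (?g * fire_count N E s n y) \<le> (real N - 1) * (?g * fire_count N E s n y)"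
    using out_deg_le[OF no_loops y] y wb_gamma_pos[of s] fire_count_nonneg[of N E s n y]
    by (intro mult_right_mono) auto
  with fire_count_edge[OF y x const] drift
  have "?g * fire_count N E s n x \<le> ?g * (2 * eps_norm1 N E s / ?g + (real N - 1) * fire_count N E s n y)"
    using wb_gamma_pos[of s] by (simp add: algebra_simps)
  then show ?thesis using wb_gamma_pos[of s] by simp
qed

lemma sum_fire_count_le:
  assumes edges: "E \<subseteq> {1..N} \<times> {1..N}" and no_loops: "\<forall>i. (i, i) \<notin> E"
    and sc: "strongly_connected N E"
    and const: "\<forall>k. s \<le> k \<and> k < s + n \<longrightarrow> wb_gamma k = wb_gamma s"
    and v: "v \<in> {1..N}" and silent: "\<forall>k. s \<le> k \<and> k < s + n \<longrightarrow> \<not> fire N E k v"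
  shows "(\<Sum>w\<in>{1..N}. fire_count N E s n w) \<le> 2 * eps_norm1 N E s / wb_gamma s * real N ^ N"
proof -
  let ?D = "2 * eps_norm1 N E s / wb_gamma s"
  have N: "1 \<le> N" using v by simp
  have "fire_count N E s n v = 0"
    unfolding fire_count_def using silent by (intro sum.neutral) auto
  then have "\<forall>w\<in>{1..N}. fire_count N E s n w \<le> ?D * (real N - 1 + 1) ^ (card {1..N} - 1)"
    using fire_count_edge_bound[OF edges no_loops const] sc v N
      eps_norm1_nonneg[of N E s] wb_gamma_pos[of s] edges
    by (intro bound_propagates_backward[where v = v]) (auto simp: strongly_connected_def)
  then have "(\<Sum>w\<in>{1..N}. fire_count N E s n w) \<le> real N * (?D * real N ^ (N - 1))"
    using sum_mono[of "{1..N}" "fire_count N E s n" "\<lambda>_. ?D * real N ^ (N - 1)"] by simp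
  also have "\<dots> = ?D * real N ^ N"
    using N by (simp add: power_eq_if)
  finally show ?thesis .
qed

lemma sum_fire_count_ge:
  assumes "\<forall>k. s \<le> k \<and> k < s + n \<longrightarrow> (\<exists>j\<in>{1..N}. fire N E k j)"
  shows "real n \<le> (\<Sum>w\<in>{1..N}. fire_count N E s n w)"
proof -
  have "real n = (\<Sum>k\<in>{s..<s + n}. 1)" by simp
  also have "\<dots> \<le> (\<Sum>k\<in>{s..<s + n}. \<Sum>w\<in>{1..N}. of_bool (fire N E k w))"
  proof (rule sum_mono)
    fix k assume "k \<in> {s..<s + n}"
    then obtain j where "j \<in> {1..N}" "fire N E k j" using assms by auto
    then show "1 \<le> (\<Sum>w\<in>{1..N}. of_bool (fire N E k w) :: real)"
      using member_le_sum[of j "{1..N}" "\<lambda>w. of_bool (fire N E k w) :: real"] by simp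
  qed
  also have "\<dots> = (\<Sum>w\<in>{1..N}. fire_count N E s n w)"
    unfolding fire_count_def by (rule sum.swap)
  finally show ?thesis .
qed

lemma eps_norm1_crossing_imp_gamma_change:
  assumes "eps_norm1 N E p < c * wb_gamma p" "c * wb_gamma (Suc p) \<le> eps_norm1 N E (Suc p)"
  shows "wb_gamma (Suc p) \<noteq> wb_gamma p"
  using assms eps_norm1_Suc_le[of N E p] by auto

lemma eps_norm1_Suc_div_gamma_less:
  assumes "eps_norm1 N E p < 2 * real N * (real N - 1) * wb_gamma p"
  shows "2 * eps_norm1 N E (Suc p) / wb_gamma (Suc p) < 8 * real N * (real N - 1)"
proof -
  have "0 \<le> 2 * real N * (real N - 1)" by (cases N) simp_all
  from mult_left_mono[OF wb_gamma_le_double_Suc[of p] this]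
  have "2 * real N * (real N - 1) * wb_gamma p \<le> 4 * real N * (real N - 1) * wb_gamma (Suc p)"
    by (simp add: algebra_simps)
  with assms eps_norm1_Suc_le[of N E p]
  have "2 * eps_norm1 N E (Suc p) < 8 * real N * (real N - 1) * wb_gamma (Suc p)" by linarith
  then show ?thesis by (simp only: pos_divide_less_eq[OF wb_gamma_pos])
qed

lemma eps_norm1_drops_below_threshold:
  assumes edges: "E \<subseteq> {1..N} \<times> {1..N}" and no_loops: "\<forall>i. (i, i) \<notin> E"
    and sc: "strongly_connected N E" and N: "2 \<le> N"
    and const: "\<forall>k. s \<le> k \<and> k < s + n \<longrightarrow> wb_gamma k = wb_gamma s"
    and long: "2 * eps_norm1 N E s / wb_gamma s * real N ^ N < real n"
  shows "\<exists>k. s \<le> k \<and> k < s + n \<and> eps_norm1 N E k < 2 * real N * (real N - 1) * wb_gamma k"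
proof (rule ccontr)
  assume "\<not> ?thesis"
  then have "\<forall>k. s \<le> k \<and> k < s + n \<longrightarrow> (\<exists>j\<in>{1..N}. fire N E k j)"
    using eps_norm1_less_if_none_fires[OF no_loops N] by (meson not_le)
  then have "real n \<le> (\<Sum>w\<in>{1..N}. fire_count N E s n w)"
    by (rule sum_fire_count_ge)
  moreover obtain v where "v \<in> {1..N}" "\<forall>k. s \<le> k \<and> k < s + n \<longrightarrow> \<not> fire N E k v"
    using exists_silent_node[OF edges sc N] by blast
  then have "(\<Sum>w\<in>{1..N}. fire_count N E s n w) \<le> 2 * eps_norm1 N E s / wb_gamma s * real N ^ N"
    by (rule sum_fire_count_le[OF edges no_loops sc const])
  ultimately show False using long by simp
qed

lemma firing_bound_le_window:
  "8 * N * (N - 1) * N ^ N \<le> 3 * N * (N - 1) * N ^ (2 * N)"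
proof (cases "2 \<le> N")
  case True
  have "4 \<le> N ^ 2" using True power_mono[of 2 N 2] by simp
  also have "\<dots> \<le> N ^ N" using True by (intro power_increasing) auto
  finally have "8 * N ^ N \<le> 3 * N ^ N * N ^ N" by simp
  then show ?thesis by (simp add: power_mult[symmetric] mult_2 power_add)
next
  case False
  then consider "N = 0" | "N = 1" by linarith
  then show ?thesis by cases simp_all
qed

theorem lemma7:
  fixes N :: nat and E :: "(nat \<times> nat) set" and k0 \<tau> :: nat
  assumes edges: "E \<subseteq> {1..N} \<times> {1..N}"
    and no_loops: "\<forall>i. (i, i) \<notin> E"
    and sc: "strongly_connected N E"
    and k0_pos: "k0 \<ge> 1"
    and k0_const: "\<forall>k. k0 \<le> k \<and> k \<le> k0 + 3 * N * (N - 1) * N ^ (2 * N) \<longrightarrow> wb_gamma k = wb_gamma k0"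
    and tau_ge: "\<tau> \<ge> k0"
    and prev: "eps_norm1 N E (\<tau> - 1) < 2 * real N * (real N - 1) * wb_gamma (\<tau> - 1)"
    and cur: "eps_norm1 N E \<tau> \<ge> 2 * real N * (real N - 1) * wb_gamma \<tau>"
  shows "\<exists>t. 1 \<le> t \<and> t \<le> 3 * N * (N - 1) * N ^ (2 * N) \<and>
           eps_norm1 N E (\<tau> + t) < 2 * real N * (real N - 1) * wb_gamma (\<tau> + t)"
proof -
  define T where "T = 3 * N * (N - 1) * N ^ (2 * N)"
  have N: "2 \<le> N"
  proof (rule ccontr)
    assume "\<not> 2 \<le> N"
    then have "2 * real N * (real N - 1) = 0" by (cases "N = 0") auto
    with prev eps_norm1_nonneg[of N E "\<tau> - 1"] show False by simp
  qed
  obtain p where p: "\<tau> = Suc p" using k0_pos tau_ge by (cases \<tau>) auto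
  with prev have prev': "eps_norm1 N E p < 2 * real N * (real N - 1) * wb_gamma p" by simp
  with cur p have change: "wb_gamma (Suc p) \<noteq> wb_gamma p"
    using eps_norm1_crossing_imp_gamma_change by blast
  have const: "\<forall>k. \<tau> \<le> k \<and> k < \<tau> + Suc T \<longrightarrow> wb_gamma k = wb_gamma \<tau>"
  proof (intro allI impI)
    fix k assume "\<tau> \<le> k \<and> k < \<tau> + Suc T"
    with tau_ge show "wb_gamma k = wb_gamma \<tau>" unfolding p
      by (intro wb_gamma_const_on_window[OF change _ k0_const[folded T_def]]) auto
  qed
  have "2 * eps_norm1 N E \<tau> / wb_gamma \<tau> * real N ^ N < 8 * real N * (real N - 1) * real N ^ N"
    using eps_norm1_Suc_div_gamma_less[OF prev'] p N by (intro mult_strict_right_mono) simp_all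
  also have "\<dots> = real (8 * N * (N - 1) * N ^ N)"
    using N by (simp add: of_nat_diff)
  also have "\<dots> \<le> real T"
    unfolding T_def by (rule of_nat_mono[OF firing_bound_le_window])
  finally have long: "2 * eps_norm1 N E \<tau> / wb_gamma \<tau> * real N ^ N < real (Suc T)" by simp
  obtain k where k: "\<tau> \<le> k" "k < \<tau> + Suc T"
      "eps_norm1 N E k < 2 * real N * (real N - 1) * wb_gamma k"
    using eps_norm1_drops_below_threshold[OF edges no_loops sc N const long] by blast
  with cur have "\<tau> < k" by (cases "k = \<tau>") auto
  with k show ?thesis unfolding T_def[symmetric] by (intro exI[of _ "k - \<tau>"]) auto
qed

end
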